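(* Let $\Theta\subset\mathbb{R}$ be a finite nonempty set of nonzero reals with $|\bar\theta|\in(0,\pi)$ for all $\bar\theta\in\Theta$, let $\bar\theta_M:=\max_{\bar\theta\in\Theta}|\bar\theta|$, and let $0<\gamma_\theta<\frac{4r_o\|p_d-p_o\|}{\pi^2}$. Set $\delta^*_{\mathcal{V}}:=\Big(\frac{2r_o\|p_d-p_o\|}{\pi^2}-\frac{\gamma_\theta}{2}\Big)\bar\theta_M^2$. Then for every $\delta_{\mathcal{V}}\in(0,\delta^*_{\mathcal{V}}]$, $\mathcal{V}_{nav}$ is a synergistic navigation function on $\mathcal{X}_p\times\mathbb{R}$ relative to $\mathcal{A}_p=\{(p_d,0)\}$ with gap exceeding $\delta_{\mathcal{V}}$, i.e. $\mathcal{V}_{nav}(p,\theta)-\min_{\bar\theta\in\Theta}\mathcal{V}_{nav}(p,\bar\theta)>\delta_{\mathcal{V}}$ for all $(p,\theta)\in C_{\mathcal{V}_{nav}}\setminus\mathcal{A}_p$.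
   Context: Obstacle $\mathcal{O}=\{z\in\mathbb{R}^2:\|z-p_o\|\le r_o\}$ with center $p_o\in\mathbb{R}^2$ and radius $r_o>0$; safety margin $\varepsilon>0$; free space $\mathcal{X}_p=\{p\in\mathbb{R}^2:\|p-p_o\|\ge r_o+\varepsilon\}$. Distance $d_o(p)=\|p-p_o\|-r_o$. Destination $p_d\in\mathcal{X}_p$, $r_d:=d_o(p_d)$, and $r_s\in(\varepsilon,r_d)$. Barrier $\phi(z)=(z-r_s)^2\ln(r_s/z)$ for $z\in(0,r_s]$ and $\phi(z)=0$ for $z>r_s$. Navigation function $V_{nav}(p)=\frac12\|p-p_d\|^2+\varrho\,\phi(d_o(p))$ with $\varrho>0$; $C_{V_{nav}}=\{p\in\mathcal{X}_p:\nabla_pV_{nav}(p)=0\}$. Rotation $\mathcal{R}(\theta)=\exp(\theta\Delta)=\begin{bmatrix}\cos\theta&-\sin\theta\\ \sin\theta&\cos\theta\end{bmatrix}$ with $\Delta=\begin{bmatrix}0&-1\\1&0\end{bmatrix}$. Transformation $\mathcal{T}(p,\theta)=p_o+\mathcal{R}(\theta)(p-p_o)$. Modified navigation function $\mathcal{V}_{nav}(p,\theta)=\frac12\|\mathcal{T}(p,\theta)-p_d\|^2+\varrho\phi(d_o(p))+\frac{\gamma_\theta}{2}\theta^2$. Critical set $C_{\mathcal{V}_{nav}}=\{(p,\theta)\in\mathcal{X}_p\times\mathbb{R}:\nabla_p\mathcal{V}_{nav}=0,\nabla_\theta\mathcal{V}_{nav}=0\}$ (which equals $C_{V_{nav}}\times\{0\}$).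 Definition: for finite nonempty $\Theta\subset\mathbb{R}$, a function $\mathcal{V}:\mathcal{X}_p\times\mathbb{R}\to\mathbb{R}_{\ge0}$ is a synergistic navigation function relative to $\mathcal{A}_p$ with gap exceeding $\delta_{\mathcal{V}}>0$ if $\mathcal{V}(p,\theta)-\min_{\bar\theta\in\Theta}\mathcal{V}(p,\bar\theta)>\delta_{\mathcal{V}}$ for all $(p,\theta)\in C_{\mathcal{V}}\setminus\mathcal{A}_p$. *)

theory Defs
  imports "HOL-Analysis.Analysis"
begin

definition rot :: "real \<Rightarrow> real^2^2" where
  "rot \<theta> = vector [vector [cos \<theta>, - sin \<theta>], vector [sin \<theta>, cos \<theta>]]"

definition transf :: "real^2 \<Rightarrow> real^2 \<Rightarrow> real \<Rightarrow> real^2" where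
  "transf p_o p \<theta> = p_o + rot \<theta> *v (p - p_o)"

definition d_o :: "real^2 \<Rightarrow> real \<Rightarrow> real^2 \<Rightarrow> real" where
  "d_o p_o r_o p = norm (p - p_o) - r_o"

definition free_space :: "real^2 \<Rightarrow> real \<Rightarrow> real \<Rightarrow> (real^2) set" where
  "free_space p_o r_o \<epsilon> = {p. norm (p - p_o) \<ge> r_o + \<epsilon>}"

text \<open>Barrier: (z - r_s)^2 ln(r_s/z) on (0, r_s], zero for z > r_s
  (only evaluated at z >= epsilon > 0 in the statement).\<close>
definition barrier :: "real \<Rightarrow> real \<Rightarrow> real" where
  "barrier r_s z = (if z \<le> r_s then (z - r_s)^2 * ln (r_s / z) else 0)"

definition Vnav_mod :: "real^2 \<Rightarrow> real \<Rightarrow> real^2 \<Rightarrow> real \<Rightarrow> real \<Rightarrow> real \<Rightarrow> real^2 \<Rightarrow> real \<Rightarrow> real" where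
  "Vnav_mod p_o r_o p_d r_s \<rho> \<gamma> p \<theta> =
     (1/2) * (norm (transf p_o p \<theta> - p_d))^2 + \<rho> * barrier r_s (d_o p_o r_o p) + (\<gamma>/2) * \<theta>^2"

definition crit_set :: "(real^2) set \<Rightarrow> (real^2 \<Rightarrow> real \<Rightarrow> real) \<Rightarrow> ((real^2) \<times> real) set" where
  "crit_set X V = {(p, \<theta>). p \<in> X \<and>
       ((\<lambda>q. V q \<theta>) has_derivative (\<lambda>h. 0)) (at p) \<and>
       ((\<lambda>t. V p t) has_real_derivative 0) (at \<theta>)}"

definition synergistic_nav :: "real set \<Rightarrow> (real^2) set \<Rightarrow> (real^2 \<Rightarrow> real \<Rightarrow> real) \<Rightarrow> ((real^2) \<times> real) set \<Rightarrow> real \<Rightarrow> bool" where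
  "synergistic_nav \<Theta> X V A \<delta> \<longleftrightarrow>
     (\<forall>p\<in>X. \<forall>\<theta>. V p \<theta> \<ge> 0) \<and>
     (\<forall>(p, \<theta>) \<in> crit_set X V - A. V p \<theta> - Min ((\<lambda>t. V p t) ` \<Theta>) > \<delta>)"

end

theory Submission
  imports Defs
begin

(*
  Rotating p about p_o by s changes the first term of Vnav_mod exactly as shifting theta by s
  does, and leaves the barrier term unchanged.  Hence at a critical point the derivative along
  this rotation is both 0 and -gamma * theta, so theta = 0; the theta-derivative at 0 then forces
  p - p_o and p_d - p_o to be collinear.  On the parallel side the first-order conditions in the
  radial directions (the barrier does not increase outwards and vanishes far from the obstacle)
  leave only p = p_d.  At an antiparallel critical point, passing to the angle t in Theta of
  largest modulus lowers Vnav_mod by |p - p_o| |p_d - p_o| (1 - cos t) - gamma t^2 / 2, and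
  Jordan's inequality 1 - cos t >= 2 t^2 / pi^2 together with |p - p_o| > r_o yields the gap.
*)

lemma has_derivative_zero_compose:
  assumes "(F has_derivative (\<lambda>h. 0)) (at (c t))" and "(c has_derivative c') (at t)"
  shows "((\<lambda>s. F (c s)) has_real_derivative 0) (at t)"
  using has_derivative_compose[OF assms(2,1)] by (simp add: has_field_derivative_def lambda_zero)

lemma slope_nonneg_at_stationary_point:
  fixes F :: "'a::real_normed_vector \<Rightarrow> real"
  assumes "(F has_derivative (\<lambda>h. 0)) (at p)" and "0 < \<eta>"
    and "\<And>s. 0 < s \<Longrightarrow> s < \<eta> \<Longrightarrow> F (p + s *\<^sub>R h) - F p \<le> a * s + b * s\<^sup>2"
  shows "0 \<le> a"
proof -
  have "((\<lambda>s::real. p + s *\<^sub>R h) has_derivative (\<lambda>s. s *\<^sub>R h)) (at 0)"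
    by (auto intro!: derivative_eq_intros)
  with assms(1) have "((\<lambda>s. F (p + s *\<^sub>R h)) has_real_derivative 0) (at 0)"
    using has_derivative_zero_compose[where c = "\<lambda>s. p + s *\<^sub>R h" and t = 0] by simp
  then have slope: "((\<lambda>s. (F (p + s *\<^sub>R h) - F p) / s) \<longlongrightarrow> 0) (at_right 0)"
    by (simp add: has_field_derivative_iff filterlim_at_split)
  have bound: "((\<lambda>s. a + b * s) \<longlongrightarrow> a) (at_right 0)"
    by (auto intro!: tendsto_eq_intros)
  have "eventually (\<lambda>s. (F (p + s *\<^sub>R h) - F p) / s \<le> a + b * s) (at_right 0)"
    unfolding eventually_at_right[OF assms(2)]
    using assms(2,3) by (auto simp: divide_simps power2_eq_square algebra_simps)
  from tendsto_le[OF _ bound slope this] show ?thesis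
    by simp
qed

lemma two_div_pi_mult_le_sin:
  assumes "0 \<le> x" and "x \<le> pi / 2"
  shows "2 / pi * x \<le> sin x"
proof -
  have concave: "concave_on {0..pi/2} sin"
    by (rule f''_le0_imp_concave[where f' = cos and f'' = "\<lambda>x. - sin x"])
       (auto intro!: DERIV_sin DERIV_cos sin_ge_zero)
  have "0 \<le> 2 / pi * x" and "2 / pi * x \<le> 1"
    using assms by (auto simp: field_simps)
  from concave_onD[OF concave this, of 0 "pi / 2"]
  have "(1 - 2 / pi * x) * sin 0 + (2 / pi * x) * sin (pi / 2)
      \<le> sin ((1 - 2 / pi * x) * 0 + (2 / pi * x) * (pi / 2))"
    by auto
  then show ?thesis
    by simp
qed

lemma one_minus_cos_ge:
  assumes "\<bar>t\<bar> \<le> pi"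
  shows "2 / pi\<^sup>2 * t\<^sup>2 \<le> 1 - cos t"
proof -
  have "2 / pi * \<bar>t / 2\<bar> \<le> \<bar>sin (t / 2)\<bar>"
    using two_div_pi_mult_le_sin[of "\<bar>t / 2\<bar>"] assms by (cases "0 \<le> t") auto
  then have "(2 / pi * \<bar>t / 2\<bar>)\<^sup>2 \<le> \<bar>sin (t / 2)\<bar>\<^sup>2"
    by (rule power_mono) simp
  moreover have "1 - cos t = 2 * (sin (t / 2))\<^sup>2"
    using cos_double_sin[of "t / 2"] by simp
  ultimately show ?thesis
    by (simp add: power_mult_distrib power_divide)
qed

lemma barrier_nonneg: "0 < z \<Longrightarrow> 0 < r_s \<Longrightarrow> 0 \<le> barrier r_s z"
  unfolding barrier_def by (auto intro!: mult_nonneg_nonneg ln_ge_zero simp: divide_simps)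

lemma barrier_antimono:
  assumes "0 < z" and "z \<le> z'" and "0 < r_s"
  shows "barrier r_s z' \<le> barrier r_s z"
proof (cases "z' \<le> r_s")
  case False
  then show ?thesis
    using barrier_nonneg[OF assms(1,3)] by (simp add: barrier_def)
next
  case True
  have "(z' - r_s)\<^sup>2 \<le> (z - r_s)\<^sup>2"
    using assms True by (simp add: power2_commute[of _ r_s] power_mono)
  moreover have "ln (r_s / z') \<le> ln (r_s / z)"
    using assms by (simp add: divide_left_mono)
  moreover have "0 \<le> ln (r_s / z')"
    using assms True by (simp add: ln_ge_zero)
  ultimately show ?thesis
    using True assms by (simp add: barrier_def mult_mono)
qed

definition perp :: "real^2 \<Rightarrow> real^2" where
  "perp x = vector [- x$2, x$1]"

lemma inner_vec2: "x \<bullet> y = x$1 * y$1 + x$2 * y$2" for x y :: "real^2"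
  by (simp add: inner_vec_def sum_2)

lemma rot_mult_vec: "rot t *v x = cos t *\<^sub>R x + sin t *\<^sub>R perp x"
  by (simp add: vec_eq_iff forall_2 matrix_vector_mult_def sum_2 rot_def perp_def algebra_simps)

lemma rot_zero [simp]: "rot 0 *v x = x"
  by (simp add: rot_mult_vec)

lemma rot_rot: "rot a *v (rot b *v x) = rot (a + b) *v x"
  by (simp add: vec_eq_iff forall_2 matrix_vector_mult_def sum_2 rot_def cos_add sin_add algebra_simps)

lemma norm_rot [simp]: "norm (rot t *v x) = norm x"
proof -
  have "(cos t * x$1 - sin t * x$2)\<^sup>2 + (sin t * x$1 + cos t * x$2)\<^sup>2
      = x$1 * x$1 + x$2 * x$2"
    using sin_cos_squared_add[of t] by algebra
  then show ?thesis
    by (simp add: norm_eq_sqrt_inner inner_vec2 matrix_vector_mult_def sum_2 rot_def power2_eq_square)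
qed

lemma inner_sq_add_perp_inner_sq: "(x \<bullet> w)\<^sup>2 + (perp x \<bullet> w)\<^sup>2 = (norm x * norm w)\<^sup>2"
  by (simp add: power_mult_distrib power2_norm_eq_inner inner_vec2 perp_def) algebra

lemma norm_rot_diff_sq:
  "(norm (rot t *v x - w))\<^sup>2 = (norm x)\<^sup>2 + (norm w)\<^sup>2 - 2 * (cos t * (x \<bullet> w) + sin t * (perp x \<bullet> w))"
proof -
  have "(norm (rot t *v x - w))\<^sup>2 = (norm (rot t *v x))\<^sup>2 + (norm w)\<^sup>2 - 2 * ((rot t *v x) \<bullet> w)"
    using dot_norm_neg[of "rot t *v x" w] by (simp add: field_simps)
  then show ?thesis
    by (simp only: norm_rot) (simp add: rot_mult_vec inner_add_left)
qed

lemma Vnav_mod_polar: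
  "Vnav_mod p_o r_o p_d r_s \<rho> \<gamma> p t =
     ((norm (p - p_o))\<^sup>2 + (norm (p_d - p_o))\<^sup>2) / 2
     - cos t * ((p - p_o) \<bullet> (p_d - p_o)) - sin t * (perp (p - p_o) \<bullet> (p_d - p_o))
     + \<rho> * barrier r_s (d_o p_o r_o p) + \<gamma> / 2 * t\<^sup>2"
proof -
  have "transf p_o p t - p_d = rot t *v (p - p_o) - (p_d - p_o)"
    by (simp add: transf_def algebra_simps)
  then show ?thesis
    by (simp only: Vnav_mod_def norm_rot_diff_sq) simp
qed

lemma Vnav_mod_at_zero:
  "Vnav_mod p_o r_o p_d r_s \<rho> \<gamma> p 0 = (norm (p - p_d))\<^sup>2 / 2 + \<rho> * barrier r_s (d_o p_o r_o p)"
  by (simp add: Vnav_mod_def transf_def)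

lemma Vnav_mod_rotate:
  "Vnav_mod p_o r_o p_d r_s \<rho> \<gamma> (p_o + rot s *v (p - p_o)) \<theta> =
     Vnav_mod p_o r_o p_d r_s \<rho> \<gamma> p (\<theta> + s) - \<gamma> / 2 * ((\<theta> + s)\<^sup>2 - \<theta>\<^sup>2)"
proof -
  have "transf p_o (p_o + rot s *v (p - p_o)) \<theta> = transf p_o p (\<theta> + s)"
    by (simp add: transf_def rot_rot)
  moreover have "d_o p_o r_o (p_o + rot s *v (p - p_o)) = d_o p_o r_o p"
    by (simp add: d_o_def)
  ultimately show ?thesis
    by (simp add: Vnav_mod_def algebra_simps)
qed

lemma Vnav_mod_has_derivative_theta:
  "((\<lambda>t. Vnav_mod p_o r_o p_d r_s \<rho> \<gamma> p t) has_real_derivative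
      sin t * ((p - p_o) \<bullet> (p_d - p_o)) - cos t * (perp (p - p_o) \<bullet> (p_d - p_o)) + \<gamma> * t) (at t)"
  unfolding Vnav_mod_polar
  by (auto intro!: derivative_eq_intros simp: power2_eq_square algebra_simps)

lemma Vnav_mod_nonneg:
  assumes "0 < d_o p_o r_o p" and "0 < r_s" and "0 \<le> \<rho>" and "0 \<le> \<gamma>"
  shows "0 \<le> Vnav_mod p_o r_o p_d r_s \<rho> \<gamma> p \<theta>"
  using barrier_nonneg[OF assms(1,2)] assms(3,4) by (simp add: Vnav_mod_def)

lemma crit_set_Vnav_mod_theta_eq_0:
  assumes "(p, \<theta>) \<in> crit_set X (Vnav_mod p_o r_o p_d r_s \<rho> \<gamma>)" and "\<gamma> \<noteq> 0"
  shows "\<theta> = 0"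
proof -
  let ?V = "Vnav_mod p_o r_o p_d r_s \<rho> \<gamma>"
  define c where "c s = p_o + rot s *v (p - p_o)" for s
  have "(c has_derivative (\<lambda>u. u *\<^sub>R perp (p - p_o))) (at 0)"
    unfolding c_def rot_mult_vec by (auto intro!: derivative_eq_intros)
  moreover have "c 0 = p"
    by (simp add: c_def)
  ultimately have "((\<lambda>s. ?V (c s) \<theta>) has_real_derivative 0) (at 0)"
    using assms(1) has_derivative_zero_compose[of "\<lambda>q. ?V q \<theta>" c 0] by (simp add: crit_set_def)
  moreover have "((\<lambda>s. ?V (c s) \<theta>) has_real_derivative 0 - \<gamma> * \<theta>) (at 0)"
  proof -
    have "((\<lambda>s. ?V p (s + \<theta>)) has_real_derivative 0) (at 0)"
      using assms(1) DERIV_shift[of "?V p" 0 0 \<theta>] by (simp add: crit_set_def)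
    then show ?thesis
      unfolding c_def Vnav_mod_rotate
      by (auto intro!: derivative_eq_intros simp: add.commute power2_eq_square algebra_simps)
  qed
  ultimately have "\<gamma> * \<theta> = 0"
    using DERIV_unique by force
  with assms(2) show ?thesis
    by simp
qed

lemma crit_set_Vnav_mod_perp_inner_eq_0:
  assumes "(p, 0) \<in> crit_set X (Vnav_mod p_o r_o p_d r_s \<rho> \<gamma>)"
  shows "perp (p - p_o) \<bullet> (p_d - p_o) = 0"
proof -
  have "((\<lambda>t. Vnav_mod p_o r_o p_d r_s \<rho> \<gamma> p t) has_real_derivative 0) (at 0)"
    using assms by (simp add: crit_set_def)
  from DERIV_unique[OF Vnav_mod_has_derivative_theta this] show ?thesis
    by simp
qed

lemma Vnav_mod_at_zero_step:
  "Vnav_mod p_o r_o p_d r_s \<rho> \<gamma> (p + s *\<^sub>R h) 0 - Vnav_mod p_o r_o p_d r_s \<rho> \<gamma> p 0 =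
     s * ((p - p_d) \<bullet> h) + (norm h)\<^sup>2 / 2 * s\<^sup>2
     + \<rho> * (barrier r_s (d_o p_o r_o (p + s *\<^sub>R h)) - barrier r_s (d_o p_o r_o p))"
proof -
  have eq: "p + s *\<^sub>R h - p_d = (p - p_d) + s *\<^sub>R h"
    by (simp add: algebra_simps)
  have "(norm ((p - p_d) + s *\<^sub>R h))\<^sup>2 = (norm (p - p_d))\<^sup>2 + 2 * s * ((p - p_d) \<bullet> h) + s\<^sup>2 * (norm h)\<^sup>2"
    using dot_norm[of "p - p_d" "s *\<^sub>R h"] by (simp add: power_mult_distrib)
  then show ?thesis
    unfolding Vnav_mod_at_zero eq by (simp add: algebra_simps)
qed

lemma crit_set_Vnav_mod_outward:
  assumes "(p, 0) \<in> crit_set X (Vnav_mod p_o r_o p_d r_s \<rho> \<gamma>)"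
    and "0 < d_o p_o r_o p" and "0 < r_s" and "0 \<le> \<rho>"
  shows "0 \<le> (p - p_d) \<bullet> (p - p_o)"
proof (rule slope_nonneg_at_stationary_point)
  show "((\<lambda>q. Vnav_mod p_o r_o p_d r_s \<rho> \<gamma> q 0) has_derivative (\<lambda>h. 0)) (at p)"
    using assms(1) by (simp add: crit_set_def)
next
  fix s :: real assume "0 < s" "s < 1"
  have "p + s *\<^sub>R (p - p_o) - p_o = (1 + s) *\<^sub>R (p - p_o)"
    by (simp add: algebra_simps)
  then have "d_o p_o r_o p \<le> d_o p_o r_o (p + s *\<^sub>R (p - p_o))"
    using \<open>0 < s\<close> by (simp add: d_o_def distrib_right)
  then have "\<rho> * barrier r_s (d_o p_o r_o (p + s *\<^sub>R (p - p_o))) \<le> \<rho> * barrier r_s (d_o p_o r_o p)"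
    using assms(2-4) by (simp add: barrier_antimono mult_left_mono)
  then show "Vnav_mod p_o r_o p_d r_s \<rho> \<gamma> (p + s *\<^sub>R (p - p_o)) 0 - Vnav_mod p_o r_o p_d r_s \<rho> \<gamma> p 0
      \<le> (p - p_d) \<bullet> (p - p_o) * s + (norm (p - p_o))\<^sup>2 / 2 * s\<^sup>2"
    unfolding Vnav_mod_at_zero_step by (simp add: algebra_simps)
qed simp

lemma crit_set_Vnav_mod_inward:
  assumes "(p, 0) \<in> crit_set X (Vnav_mod p_o r_o p_d r_s \<rho> \<gamma>)" and "r_s < d_o p_o r_o p"
  shows "(p - p_d) \<bullet> (p - p_o) \<le> 0"
proof -
  \<comment> \<open>Along the inward segment of length \<eta> the barrier stays zero.\<close>
  define \<eta> where "\<eta> = (d_o p_o r_o p - r_s) / (norm (p - p_o) + 1)"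
  have "0 \<le> - ((p - p_d) \<bullet> (p - p_o))"
  proof (rule slope_nonneg_at_stationary_point)
    show "((\<lambda>q. Vnav_mod p_o r_o p_d r_s \<rho> \<gamma> q 0) has_derivative (\<lambda>h. 0)) (at p)"
      using assms(1) by (simp add: crit_set_def)
    show "0 < \<eta>"
      using assms(2) norm_ge_zero[of "p - p_o"] unfolding \<eta>_def by (intro divide_pos_pos) linarith+
  next
    fix s :: real assume "0 < s" "s < \<eta>"
    have "s * (norm (p - p_o) + 1) < d_o p_o r_o p - r_s"
      using \<open>s < \<eta>\<close> unfolding \<eta>_def
      by (simp add: pos_less_divide_eq add_nonneg_pos)
    then have "s * norm (p - p_o) < d_o p_o r_o p - r_s"
      using \<open>0 < s\<close> by (simp add: distrib_left)
    moreover have "p + s *\<^sub>R (p_o - p) - p_o = (1 - s) *\<^sub>R (p - p_o)"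
      by (simp add: algebra_simps)
    then have "d_o p_o r_o (p + s *\<^sub>R (p_o - p)) = \<bar>1 - s\<bar> * norm (p - p_o) - r_o"
      by (simp add: d_o_def)
    moreover have "(1 - s) * norm (p - p_o) \<le> \<bar>1 - s\<bar> * norm (p - p_o)"
      by (simp add: mult_right_mono)
    ultimately have "r_s < d_o p_o r_o (p + s *\<^sub>R (p_o - p))"
      by (simp add: d_o_def left_diff_distrib)
    with assms(2) show "Vnav_mod p_o r_o p_d r_s \<rho> \<gamma> (p + s *\<^sub>R (p_o - p)) 0 - Vnav_mod p_o r_o p_d r_s \<rho> \<gamma> p 0
        \<le> - ((p - p_d) \<bullet> (p - p_o)) * s + (norm (p_o - p))\<^sup>2 / 2 * s\<^sup>2"
      unfolding Vnav_mod_at_zero_step by (simp add: barrier_def inner_diff_right algebra_simps)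
  qed
  then show ?thesis
    by simp
qed

lemma crit_set_Vnav_mod_antiparallel:
  assumes crit: "(p, \<theta>) \<in> crit_set (free_space p_o r_o \<epsilon>) (Vnav_mod p_o r_o p_d r_s \<rho> \<gamma>)"
    and "(p, \<theta>) \<noteq> (p_d, 0)"
    and "0 < r_o" and "0 < \<epsilon>" and "0 < r_s" and "r_s < d_o p_o r_o p_d" and "0 \<le> \<rho>" and "\<gamma> \<noteq> 0"
  shows "\<theta> = 0 \<and> (p - p_o) \<bullet> (p_d - p_o) = - (norm (p - p_o) * norm (p_d - p_o))"
proof -
  have "\<theta> = 0"
    using crit_set_Vnav_mod_theta_eq_0[OF crit] assms(8) .
  with crit have crit0: "(p, 0) \<in> crit_set (free_space p_o r_o \<epsilon>) (Vnav_mod p_o r_o p_d r_s \<rho> \<gamma>)"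
    by simp
  have "0 < d_o p_o r_o p"
    using crit assms(4) by (auto simp: crit_set_def free_space_def d_o_def)
  then have x_pos: "0 < norm (p - p_o)"
    using assms(3) unfolding d_o_def by linarith
  have "((p - p_o) \<bullet> (p_d - p_o))\<^sup>2 = (norm (p - p_o) * norm (p_d - p_o))\<^sup>2"
    using inner_sq_add_perp_inner_sq[of "p - p_o" "p_d - p_o"] crit_set_Vnav_mod_perp_inner_eq_0[OF crit0]
    by simp
  then consider "(p - p_o) \<bullet> (p_d - p_o) = norm (p - p_o) * norm (p_d - p_o)"
    | "(p - p_o) \<bullet> (p_d - p_o) = - (norm (p - p_o) * norm (p_d - p_o))"
    using power2_eq_iff by blast
  then show ?thesis
  proof cases
    case 1
    have "p - p_d = (p - p_o) - (p_d - p_o)"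
      by simp
    then have "(p - p_d) \<bullet> (p - p_o) = (p - p_o) \<bullet> (p - p_o) - (p_d - p_o) \<bullet> (p - p_o)"
      by (simp only: inner_diff_left[of "p - p_o" "p_d - p_o"])
    also have "\<dots> = norm (p - p_o) * (norm (p - p_o) - norm (p_d - p_o))"
      using 1 by (simp add: dot_square_norm inner_commute power2_eq_square right_diff_distrib)
    finally have radial: "(p - p_d) \<bullet> (p - p_o) = norm (p - p_o) * (norm (p - p_o) - norm (p_d - p_o))" .
    have "0 \<le> (p - p_d) \<bullet> (p - p_o)"
      using crit_set_Vnav_mod_outward[OF crit0 \<open>0 < d_o p_o r_o p\<close> assms(5,7)] .
    then have "0 \<le> norm (p - p_o) * (norm (p - p_o) - norm (p_d - p_o))"
      by (simp only: radial)
    then have "norm (p_d - p_o) \<le> norm (p - p_o)"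
      using x_pos by (simp add: zero_le_mult_iff)
    moreover have "norm (p - p_o) \<le> norm (p_d - p_o)"
    proof (cases "r_s < d_o p_o r_o p")
      case True
      have "(p - p_d) \<bullet> (p - p_o) \<le> 0"
        using crit_set_Vnav_mod_inward[OF crit0 True] .
      then have "norm (p - p_o) * (norm (p - p_o) - norm (p_d - p_o)) \<le> 0"
        by (simp only: radial)
      then show ?thesis
        using x_pos by (simp add: mult_le_0_iff)
    next
      case False
      then show ?thesis
        using assms(6) by (simp add: d_o_def)
    qed
    ultimately have "p_d - p_o = p - p_o"
      using 1 x_pos norm_cauchy_schwarz_eq[of "p - p_o" "p_d - p_o"] by simp
    with assms(2) \<open>\<theta> = 0\<close> show ?thesis
      by simp
  next
    case 2
    with \<open>\<theta> = 0\<close> show ?thesis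
      by simp
  qed
qed

lemma Vnav_mod_gap_antiparallel:
  assumes "(p - p_o) \<bullet> (p_d - p_o) = - (norm (p - p_o) * norm (p_d - p_o))"
  shows "Vnav_mod p_o r_o p_d r_s \<rho> \<gamma> p 0 - Vnav_mod p_o r_o p_d r_s \<rho> \<gamma> p t =
    norm (p - p_o) * norm (p_d - p_o) * (1 - cos t) - \<gamma> / 2 * t\<^sup>2"
proof -
  have "perp (p - p_o) \<bullet> (p_d - p_o) = 0"
    using inner_sq_add_perp_inner_sq[of "p - p_o" "p_d - p_o"] assms by simp
  then show ?thesis
    unfolding Vnav_mod_polar assms by (simp add: algebra_simps)
qed

lemma Vnav_mod_gap_gt:
  assumes "(p - p_o) \<bullet> (p_d - p_o) = - (norm (p - p_o) * norm (p_d - p_o))"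
    and "r_o < norm (p - p_o)" and "p_d \<noteq> p_o" and "t \<noteq> 0" and "\<bar>t\<bar> \<le> pi"
  shows "(2 * r_o * norm (p_d - p_o) / pi\<^sup>2 - \<gamma> / 2) * t\<^sup>2
    < Vnav_mod p_o r_o p_d r_s \<rho> \<gamma> p 0 - Vnav_mod p_o r_o p_d r_s \<rho> \<gamma> p t"
proof -
  have "0 < norm (p_d - p_o) * (2 / pi\<^sup>2 * t\<^sup>2)"
    using assms(3,4) by simp
  then have "r_o * (norm (p_d - p_o) * (2 / pi\<^sup>2 * t\<^sup>2)) < norm (p - p_o) * (norm (p_d - p_o) * (2 / pi\<^sup>2 * t\<^sup>2))"
    by (rule mult_strict_right_mono[OF assms(2)])
  also have "\<dots> \<le> norm (p - p_o) * (norm (p_d - p_o) * (1 - cos t))"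
    by (intro mult_left_mono one_minus_cos_ge[OF assms(5)] norm_ge_zero)
  finally show ?thesis
    unfolding Vnav_mod_gap_antiparallel[OF assms(1)] by (simp add: algebra_simps)
qed

theorem lemma3:
  fixes p_o p_d :: "real^2" and r_o \<epsilon> r_s \<rho> \<gamma> :: real and \<Theta> :: "real set"
  assumes "r_o > 0" and "\<epsilon> > 0"
    and "p_d \<in> free_space p_o r_o \<epsilon>"
    and "\<epsilon> < r_s" and "r_s < d_o p_o r_o p_d"
    and "\<rho> > 0"
    and "finite \<Theta>" and "\<Theta> \<noteq> {}"
    and "\<forall>t\<in>\<Theta>. 0 < \<bar>t\<bar> \<and> \<bar>t\<bar> < pi"
    and "0 < \<gamma>" and "\<gamma> < 4 * r_o * norm (p_d - p_o) / pi^2"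
  shows "\<forall>\<delta>. 0 < \<delta> \<and>
           \<delta> \<le> (2 * r_o * norm (p_d - p_o) / pi^2 - \<gamma> / 2) * (Max (abs ` \<Theta>))^2 \<longrightarrow>
         synergistic_nav \<Theta> (free_space p_o r_o \<epsilon>) (Vnav_mod p_o r_o p_d r_s \<rho> \<gamma>) {(p_d, 0)} \<delta>"
proof (intro allI impI)
  fix \<delta> assume \<delta>: "0 < \<delta> \<and> \<delta> \<le> (2 * r_o * norm (p_d - p_o) / pi^2 - \<gamma> / 2) * (Max (abs ` \<Theta>))^2"
  let ?V = "Vnav_mod p_o r_o p_d r_s \<rho> \<gamma>"
  have pos: "r_o < norm (p - p_o)" if "p \<in> free_space p_o r_o \<epsilon>" for p
    using that assms(2) by (simp add: free_space_def)
  have "0 < r_s" and "0 \<le> \<rho>" and "\<gamma> \<noteq> 0" and "p_d \<noteq> p_o"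
    using assms(1-4,6,10) pos[OF assms(3)] by auto
  have "Max (abs ` \<Theta>) \<in> abs ` \<Theta>"
    using assms(7,8) by simp
  then obtain t where t: "t \<in> \<Theta>" "\<bar>t\<bar> = Max (abs ` \<Theta>)"
    by auto
  have "\<delta> < ?V p \<theta> - Min (?V p ` \<Theta>)"
    if crit: "(p, \<theta>) \<in> crit_set (free_space p_o r_o \<epsilon>) ?V" and "(p, \<theta>) \<noteq> (p_d, 0)" for p \<theta>
  proof -
    have "\<theta> = 0" and anti: "(p - p_o) \<bullet> (p_d - p_o) = - (norm (p - p_o) * norm (p_d - p_o))"
      using crit_set_Vnav_mod_antiparallel[OF that assms(1,2) \<open>0 < r_s\<close> assms(5) \<open>0 \<le> \<rho>\<close> \<open>\<gamma> \<noteq> 0\<close>]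
      by auto
    have "r_o < norm (p - p_o)"
      using crit pos by (simp add: crit_set_def)
    have "\<delta> \<le> (2 * r_o * norm (p_d - p_o) / pi\<^sup>2 - \<gamma> / 2) * t\<^sup>2"
      using \<delta> unfolding t(2)[symmetric] power2_abs by simp
    also have "\<dots> < ?V p 0 - ?V p t"
      using Vnav_mod_gap_gt[OF anti \<open>r_o < norm (p - p_o)\<close> \<open>p_d \<noteq> p_o\<close>] assms(9) t(1) by force
    also have "\<dots> \<le> ?V p \<theta> - Min (?V p ` \<Theta>)"
      using \<open>\<theta> = 0\<close> t(1) assms(7) by simp
    finally show ?thesis .
  qed
  moreover have "0 \<le> ?V p \<theta>" if "p \<in> free_space p_o r_o \<epsilon>" for p \<theta>
    using Vnav_mod_nonneg pos[OF that] assms by (simp add: d_o_def)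
  ultimately show "synergistic_nav \<Theta> (free_space p_o r_o \<epsilon>) ?V {(p_d, 0)} \<delta>"
    by (auto simp: synergistic_nav_def)
qed

end
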